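(* Let $G$ be a metabelian group, i.e. $[[x,y],z]=1$ for all $x,y,z\in G$, where $[a,b]=a^{-1}b^{-1}ab$. Then for every real Banach space $E$, Jensen's functional equation $f(xy)+f(xy^{-1})=2f(x)$ is stable for the pair $(G;E)$: for every function $f\colon G\to E$ for which there is $c>0$ with $\|f(xy)+f(xy^{-1})-2f(x)\|\le c$ for all $x,y\in G$, there exists a function $j\colon G\to E$ satisfying $j(xy)+j(xy^{-1})=2j(x)$ for all $x,y\in G$ such that $j-f$ is bounded on $G$.
   Context: Groups are written multiplicatively with identity $1$. *)

theory Defs
  imports "HOL-Analysis.Analysis" "HOL-Algebra.Group"
begin

definition grp_comm :: "('a, 'b) monoid_scheme \<Rightarrow> 'a \<Rightarrow> 'a \<Rightarrow> 'a" where
  "grp_comm G a b = inv\<^bsub>G\<^esub> a \<otimes>\<^bsub>G\<^esub> inv\<^bsub>G\<^esub> b \<otimes>\<^bsub>G\<^esub> a \<otimes>\<^bsub>G\<^esub> b"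

definition metabelian_grp :: "('a, 'b) monoid_scheme \<Rightarrow> bool" where
  "metabelian_grp G \<longleftrightarrow> (\<forall>x\<in>carrier G. \<forall>y\<in>carrier G. \<forall>z\<in>carrier G.
      grp_comm G (grp_comm G x y) z = \<one>\<^bsub>G\<^esub>)"

end

theory Submission
  imports Defs
begin

(* Hyers' direct method: j x = lim f (x^(2^n)) / 2^n stays within bounded distance of f, satisfies
   j (x^2) = 2 j x, and still has bounded Jensen defect. Any expression in j that is bounded and
   doubles when its arguments are squared vanishes. This makes j odd, additive on commuting pairs,
   and -- because commutators are central, so (xy)^2 = x^2 y^2 [y,x] -- gives
   j (xy) + j (yx) = 2 j x + 2 j y. Since j [y^-1,x] = - j [y,x], the commutator terms cancel in
   j (xy) + j (xy^-1), which is therefore 2 j x. *)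

definition hyers_seq :: "('a \<Rightarrow> 'a) \<Rightarrow> ('a \<Rightarrow> 'e::real_normed_vector) \<Rightarrow> 'a \<Rightarrow> nat \<Rightarrow> 'e" where
  "hyers_seq \<sigma> g x n = inverse (2 ^ n) *\<^sub>R g ((\<sigma> ^^ n) x)"

definition hyers_limit :: "('a \<Rightarrow> 'a) \<Rightarrow> ('a \<Rightarrow> 'e::real_normed_vector) \<Rightarrow> 'a \<Rightarrow> 'e" where
  "hyers_limit \<sigma> g x = lim (hyers_seq \<sigma> g x)"

lemma hyers_seq_step_bound:
  assumes "\<sigma> ` A \<subseteq> A" and "\<forall>x\<in>A. norm (g (\<sigma> x) - 2 *\<^sub>R g x) \<le> c" and "x \<in> A"
  shows "norm (hyers_seq \<sigma> g x (Suc n) - hyers_seq \<sigma> g x n) \<le> c * (1/2) ^ Suc n"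
proof -
  define y where "y = (\<sigma> ^^ n) x"
  have "y \<in> A"
    unfolding y_def using assms(1,3) by (induction n) auto
  have "hyers_seq \<sigma> g x (Suc n) - hyers_seq \<sigma> g x n = inverse (2 ^ Suc n) *\<^sub>R (g (\<sigma> y) - 2 *\<^sub>R g y)"
    by (simp add: hyers_seq_def y_def algebra_simps)
  also have "norm \<dots> \<le> inverse (2 ^ Suc n) * c"
    using assms(2) \<open>y \<in> A\<close> by (simp add: mult_left_mono)
  finally show ?thesis
    by (simp add: field_simps)
qed

lemma
  fixes g :: "'a \<Rightarrow> 'e::banach"
  assumes "\<sigma> ` A \<subseteq> A" and "\<forall>x\<in>A. norm (g (\<sigma> x) - 2 *\<^sub>R g x) \<le> c" and "x \<in> A"
  shows LIMSEQ_hyers_limit: "hyers_seq \<sigma> g x \<longlonglongrightarrow> hyers_limit \<sigma> g x"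
    and hyers_limit_dist: "norm (hyers_limit \<sigma> g x - g x) \<le> c"
proof -
  let ?d = "\<lambda>n. hyers_seq \<sigma> g x (Suc n) - hyers_seq \<sigma> g x n"
  have geometric: "(\<lambda>n. c * (1/2) ^ Suc n) sums c"
    using sums_mult[OF geometric_sums[of "1/2::real"], of "c/2"] by (simp add: mult.commute)
  have step: "norm (?d n) \<le> c * (1/2) ^ Suc n" for n
    using hyers_seq_step_bound[OF assms] .
  have "summable ?d"
    by (rule summable_comparison_test'[OF sums_summable[OF geometric]]) (rule step)
  then have "(\<lambda>n. hyers_seq \<sigma> g x 0 + (\<Sum>i<n. ?d i)) \<longlonglongrightarrow> g x + suminf ?d"
    by (intro tendsto_add tendsto_const summable_LIMSEQ) (simp_all add: hyers_seq_def)
  then have seq: "hyers_seq \<sigma> g x \<longlonglongrightarrow> g x + suminf ?d"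
    by (simp add: sum_lessThan_telescope)
  then show "hyers_seq \<sigma> g x \<longlonglongrightarrow> hyers_limit \<sigma> g x"
    by (simp add: hyers_limit_def limI)
  have "norm (suminf ?d) \<le> c"
    using norm_suminf_le[OF step sums_summable[OF geometric]] sums_unique[OF geometric] by simp
  then show "norm (hyers_limit \<sigma> g x - g x) \<le> c"
    using seq by (simp add: hyers_limit_def limI)
qed

lemma hyers_limit_doubling:
  assumes "convergent (hyers_seq \<sigma> g x)"
  shows "hyers_limit \<sigma> g (\<sigma> x) = 2 *\<^sub>R hyers_limit \<sigma> g x"
proof -
  have shift: "hyers_seq \<sigma> g (\<sigma> x) = (\<lambda>n. 2 *\<^sub>R hyers_seq \<sigma> g x (Suc n))"
    by (simp add: hyers_seq_def funpow_swap1 fun_eq_iff)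
  have "hyers_seq \<sigma> g x \<longlonglongrightarrow> hyers_limit \<sigma> g x"
    using assms by (simp add: hyers_limit_def convergent_LIMSEQ_iff)
  then have "hyers_seq \<sigma> g (\<sigma> x) \<longlonglongrightarrow> 2 *\<^sub>R hyers_limit \<sigma> g x"
    unfolding shift by (intro tendsto_scaleR tendsto_const LIMSEQ_Suc)
  then show ?thesis
    by (simp add: hyers_limit_def limI)
qed

lemma bounded_doubling_eq_0:
  fixes \<Phi> :: "'a \<Rightarrow> 'e::real_normed_vector"
  assumes "\<sigma> ` A \<subseteq> A" and "\<And>a. a \<in> A \<Longrightarrow> \<Phi> (\<sigma> a) = 2 *\<^sub>R \<Phi> a"
    and "\<And>a. a \<in> A \<Longrightarrow> norm (\<Phi> a) \<le> B" and "a \<in> A"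
  shows "\<Phi> a = 0"
proof (rule ccontr)
  have iterate: "(\<sigma> ^^ n) a \<in> A \<and> \<Phi> ((\<sigma> ^^ n) a) = 2 ^ n *\<^sub>R \<Phi> a" for n
    using assms(1,4) by (induction n) (auto simp: assms(2))
  assume "\<Phi> a \<noteq> 0"
  then obtain n where "B / norm (\<Phi> a) < 2 ^ n"
    using real_arch_pow[of 2] by auto
  then have "B < norm (\<Phi> ((\<sigma> ^^ n) a))"
    using \<open>\<Phi> a \<noteq> 0\<close> iterate[of n] by (simp add: divide_less_eq)
  then show False
    using assms(3) iterate[of n] by fastforce
qed

context group
begin

lemma inv_mult_cancel_left [simp]:
  "x \<in> carrier G \<Longrightarrow> y \<in> carrier G \<Longrightarrow> inv x \<otimes> (x \<otimes> y) = y"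
  by (simp add: m_assoc[symmetric])

lemma mult_inv_cancel_left [simp]:
  "x \<in> carrier G \<Longrightarrow> y \<in> carrier G \<Longrightarrow> x \<otimes> (inv x \<otimes> y) = y"
  by (simp add: m_assoc[symmetric])

lemma grp_comm_closed [simp]:
  "x \<in> carrier G \<Longrightarrow> y \<in> carrier G \<Longrightarrow> grp_comm G x y \<in> carrier G"
  by (simp add: grp_comm_def)

lemma mult_eq_mult_grp_comm:
  "x \<in> carrier G \<Longrightarrow> y \<in> carrier G \<Longrightarrow> x \<otimes> y = y \<otimes> x \<otimes> grp_comm G x y"
  by (simp add: grp_comm_def m_assoc)

lemma inv_grp_comm:
  "x \<in> carrier G \<Longrightarrow> y \<in> carrier G \<Longrightarrow> inv (grp_comm G x y) = grp_comm G y x"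
  by (simp add: grp_comm_def inv_mult_group m_assoc)

lemma square_mult_commuting:
  assumes "x \<in> carrier G" "y \<in> carrier G" and "x \<otimes> y = y \<otimes> x"
  shows "(x \<otimes> y) \<otimes> (x \<otimes> y) = (x \<otimes> x) \<otimes> (y \<otimes> y)"
proof -
  have "(x \<otimes> y) \<otimes> (x \<otimes> y) = x \<otimes> (y \<otimes> x) \<otimes> y"
    using assms(1,2) by (simp add: m_assoc)
  also have "\<dots> = x \<otimes> (x \<otimes> y) \<otimes> y"
    by (simp only: assms(3))
  finally show ?thesis
    using assms(1,2) by (simp add: m_assoc)
qed

lemma squares_commute:
  assumes "x \<in> carrier G" "y \<in> carrier G" and "x \<otimes> y = y \<otimes> x"
  shows "(x \<otimes> x) \<otimes> (y \<otimes> y) = (y \<otimes> y) \<otimes> (x \<otimes> x)"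
  using square_mult_commuting[OF assms] square_mult_commuting[OF assms(2,1) assms(3)[symmetric]]
  by (simp add: assms(3))

lemma metabelian_grp_comm_central:
  assumes "metabelian_grp G" and "x \<in> carrier G" "y \<in> carrier G" "z \<in> carrier G"
  shows "grp_comm G x y \<otimes> z = z \<otimes> grp_comm G x y"
proof -
  let ?w = "grp_comm G x y"
  have "grp_comm G ?w z = \<one>"
    using assms unfolding metabelian_grp_def by blast
  moreover have "?w \<otimes> z = z \<otimes> ?w \<otimes> grp_comm G ?w z"
    using assms(2-4) by (intro mult_eq_mult_grp_comm) simp_all
  ultimately show ?thesis
    using assms(2-4) by simp
qed

lemma metabelian_square_mult:
  assumes "metabelian_grp G" and "x \<in> carrier G" "y \<in> carrier G"
  shows "(x \<otimes> y) \<otimes> (x \<otimes> y) = (x \<otimes> x) \<otimes> (y \<otimes> y) \<otimes> grp_comm G y x"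
proof -
  have "(x \<otimes> y) \<otimes> (x \<otimes> y) = x \<otimes> (y \<otimes> x) \<otimes> y"
    using assms(2,3) by (simp add: m_assoc)
  also have "\<dots> = x \<otimes> x \<otimes> y \<otimes> (grp_comm G y x \<otimes> y)"
    using assms(2,3) by (simp add: mult_eq_mult_grp_comm[of y x] m_assoc)
  also have "\<dots> = (x \<otimes> x) \<otimes> (y \<otimes> y) \<otimes> grp_comm G y x"
    using assms by (simp add: metabelian_grp_comm_central m_assoc)
  finally show ?thesis .
qed

lemma metabelian_grp_comm_inv_left:
  assumes "metabelian_grp G" and "x \<in> carrier G" "y \<in> carrier G"
  shows "grp_comm G (inv y) x = grp_comm G x y"
proof -
  have "grp_comm G (inv y) x = y \<otimes> grp_comm G x y \<otimes> inv y"
    using assms(2,3) by (simp add: grp_comm_def m_assoc)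
  also have "\<dots> = grp_comm G x y"
    using assms by (simp add: metabelian_grp_comm_central m_assoc)
  finally show ?thesis .
qed

end

definition jensen_defect :: "('a, 'b) monoid_scheme \<Rightarrow> ('a \<Rightarrow> 'e::real_vector) \<Rightarrow> 'a \<Rightarrow> 'a \<Rightarrow> 'e" where
  "jensen_defect G f x y = f (x \<otimes>\<^bsub>G\<^esub> y) + f (x \<otimes>\<^bsub>G\<^esub> inv\<^bsub>G\<^esub> y) - 2 *\<^sub>R f x"

lemma (in group) jensen_defect_perturb:
  fixes f h :: "'a \<Rightarrow> 'e::real_normed_vector"
  assumes "\<forall>x\<in>carrier G. norm (h x - f x) \<le> b" and "x \<in> carrier G" "y \<in> carrier G"
  shows "norm (jensen_defect G h x y) \<le> norm (jensen_defect G f x y) + 4 * b"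
proof -
  have "jensen_defect G h x y
      = jensen_defect G f x y + (h (x \<otimes> y) - f (x \<otimes> y)) + (h (x \<otimes> inv y) - f (x \<otimes> inv y)) + 2 *\<^sub>R (f x - h x)"
    by (simp add: jensen_defect_def algebra_simps)
  also have "norm \<dots> \<le> norm (jensen_defect G f x y) + b + b + 2 * b"
    using assms by (intro norm_triangle_mono order_refl) (simp_all add: norm_minus_commute)
  finally show ?thesis
    by simp
qed

locale homogeneous_quasi_jensen = group G for G :: "('a, 'b) monoid_scheme" (structure) +
  fixes h :: "'a \<Rightarrow> 'e::real_normed_vector" and K :: real
  assumes square: "x \<in> carrier G \<Longrightarrow> h (x \<otimes> x) = 2 *\<^sub>R h x"
    and jensen_defect_le: "x \<in> carrier G \<Longrightarrow> y \<in> carrier G \<Longrightarrow> norm (jensen_defect G h x y) \<le> K"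
begin

lemma one: "h \<one> = 0"
  using square[of \<one>] by (simp add: scaleR_2)

lemma inv:
  assumes "x \<in> carrier G"
  shows "h (inv x) = - h x"
proof -
  have "h x + h (inv x) = 0"
  proof (rule bounded_doubling_eq_0[where \<Phi> = "\<lambda>a. h a + h (inv a)" and A = "carrier G" and \<sigma> = "\<lambda>a. a \<otimes> a"])
    fix a assume "a \<in> carrier G"
    then show "h (a \<otimes> a) + h (inv (a \<otimes> a)) = 2 *\<^sub>R (h a + h (inv a))"
      by (simp add: inv_mult_group square scaleR_right_distrib)
    show "norm (h a + h (inv a)) \<le> K"
      using jensen_defect_le[of \<one> a] \<open>a \<in> carrier G\<close> by (simp add: jensen_defect_def one)
  qed (use assms in auto)
  then show ?thesis
    by (simp add: eq_neg_iff_add_eq_0 add.commute)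
qed

lemma swap_defect_le:
  assumes "x \<in> carrier G" "y \<in> carrier G"
  shows "norm (h (x \<otimes> y) + h (y \<otimes> x) - 2 *\<^sub>R h x - 2 *\<^sub>R h y) \<le> 2 * K"
proof -
  have "inv (x \<otimes> inv y) = y \<otimes> inv x"
    using assms by (simp add: inv_mult_group)
  then have "h (y \<otimes> inv x) = - h (x \<otimes> inv y)"
    using assms inv[of "x \<otimes> inv y"] by simp
  then have "h (x \<otimes> y) + h (y \<otimes> x) - 2 *\<^sub>R h x - 2 *\<^sub>R h y = jensen_defect G h x y + jensen_defect G h y x"
    by (simp add: jensen_defect_def)
  also have "norm \<dots> \<le> K + K"
    by (rule norm_triangle_mono[OF jensen_defect_le[OF assms] jensen_defect_le[OF assms(2,1)]])
  finally show ?thesis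
    by simp
qed

lemma mult_commuting:
  assumes "x \<in> carrier G" "y \<in> carrier G" and "x \<otimes> y = y \<otimes> x"
  shows "h (x \<otimes> y) = h x + h y"
proof -
  let ?A = "{(u, v). u \<in> carrier G \<and> v \<in> carrier G \<and> u \<otimes> v = v \<otimes> u}"
  have "(\<lambda>(u, v). h (u \<otimes> v) - h u - h v) (x, y) = 0"
  proof (rule bounded_doubling_eq_0[where A = ?A and \<sigma> = "\<lambda>(u, v). (u \<otimes> u, v \<otimes> v)" and B = K])
    show "(\<lambda>(u, v). (u \<otimes> u, v \<otimes> v)) ` ?A \<subseteq> ?A"
      by (auto intro: squares_commute)
    fix p assume "p \<in> ?A"
    then obtain u v where p: "p = (u, v)" and u: "u \<in> carrier G" and v: "v \<in> carrier G" and uv: "u \<otimes> v = v \<otimes> u"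
      by blast
    show "(\<lambda>(u, v). h (u \<otimes> v) - h u - h v) ((\<lambda>(u, v). (u \<otimes> u, v \<otimes> v)) p) = 2 *\<^sub>R (\<lambda>(u, v). h (u \<otimes> v) - h u - h v) p"
      using u v by (simp add: p square_mult_commuting[OF u v uv, symmetric] square algebra_simps)
    have doubled: "h (u \<otimes> v) + h (v \<otimes> u) - 2 *\<^sub>R h u - 2 *\<^sub>R h v = 2 *\<^sub>R (h (u \<otimes> v) - h u - h v)"
      by (simp add: uv algebra_simps scaleR_2)
    show "norm ((\<lambda>(u, v). h (u \<otimes> v) - h u - h v) p) \<le> K"
      using swap_defect_le[OF u v] by (simp add: p doubled)
  qed (use assms in simp)
  then show ?thesis
    by (simp add: diff_eq_eq add.commute)
qed

end

locale metabelian_homogeneous_quasi_jensen = homogeneous_quasi_jensen +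
  assumes metabelian: "metabelian_grp G"
begin

lemma mult_grp_comm:
  assumes "x \<in> carrier G" "u \<in> carrier G" "v \<in> carrier G"
  shows "h (x \<otimes> grp_comm G u v) = h x + h (grp_comm G u v)"
  using assms metabelian_grp_comm_central[OF metabelian assms(2,3,1)]
  by (intro mult_commuting) simp_all

lemma mult_add_mult_swap:
  assumes "x \<in> carrier G" "y \<in> carrier G"
  shows "h (x \<otimes> y) + h (y \<otimes> x) = 2 *\<^sub>R h x + 2 *\<^sub>R h y"
proof -
  let ?\<Phi> = "\<lambda>(u, v). h (u \<otimes> v) + h (v \<otimes> u) - 2 *\<^sub>R h u - 2 *\<^sub>R h v"
  have "?\<Phi> (x, y) = 0"
  txt \<open>The central commutators in (uv)^2 = u^2 v^2 [v,u] and (vu)^2 = v^2 u^2 [u,v] cancel by oddness.\<close>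
  proof (rule bounded_doubling_eq_0[where A = "carrier G \<times> carrier G" and \<sigma> = "\<lambda>(u, v). (u \<otimes> u, v \<otimes> v)" and B = "2 * K"])
    fix p assume "p \<in> carrier G \<times> carrier G"
    then obtain u v where p: "p = (u, v)" and u: "u \<in> carrier G" and v: "v \<in> carrier G"
      by blast
    have "h ((u \<otimes> u) \<otimes> (v \<otimes> v)) = 2 *\<^sub>R h (u \<otimes> v) - h (grp_comm G v u)"
      using square[of "u \<otimes> v"] u v
      by (simp add: metabelian_square_mult[OF metabelian] mult_grp_comm eq_diff_eq)
    moreover have "h ((v \<otimes> v) \<otimes> (u \<otimes> u)) = 2 *\<^sub>R h (v \<otimes> u) + h (grp_comm G v u)"
      using square[of "v \<otimes> u"] u v inv[of "grp_comm G v u"]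
      by (simp add: metabelian_square_mult[OF metabelian] mult_grp_comm inv_grp_comm diff_eq_eq)
    ultimately show "?\<Phi> ((\<lambda>(u, v). (u \<otimes> u, v \<otimes> v)) p) = 2 *\<^sub>R ?\<Phi> p"
      using u v by (simp add: p square algebra_simps scaleR_2)
    show "norm (?\<Phi> p) \<le> 2 * K"
      using swap_defect_le[OF u v] by (simp add: p)
  qed (use assms in auto)
  then show ?thesis
    by (simp add: algebra_simps)
qed

lemma mult:
  assumes "x \<in> carrier G" "y \<in> carrier G"
  shows "2 *\<^sub>R h (x \<otimes> y) = 2 *\<^sub>R h x + 2 *\<^sub>R h y - h (grp_comm G y x)"
proof -
  have "h (y \<otimes> x) = h (x \<otimes> y) + h (grp_comm G y x)"
    using assms by (simp add: mult_eq_mult_grp_comm[of y x] mult_grp_comm)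
  then show ?thesis
    using mult_add_mult_swap[OF assms] by (simp add: algebra_simps scaleR_2)
qed

lemma jensen_defect_eq_0:
  assumes "x \<in> carrier G" "y \<in> carrier G"
  shows "jensen_defect G h x y = 0"
proof -
  have "2 *\<^sub>R h (x \<otimes> inv y) = 2 *\<^sub>R h x - 2 *\<^sub>R h y + h (grp_comm G y x)"
    using mult[of x "inv y"] assms inv[of "grp_comm G x y"]
    by (simp add: metabelian_grp_comm_inv_left[OF metabelian] inv_grp_comm inv)
  then have "2 *\<^sub>R (h (x \<otimes> y) + h (x \<otimes> inv y))
      = (2 *\<^sub>R h x + 2 *\<^sub>R h y - h (grp_comm G y x)) + (2 *\<^sub>R h x - 2 *\<^sub>R h y + h (grp_comm G y x))"
    by (simp add: scaleR_right_distrib mult[OF assms])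
  also have "\<dots> = 2 *\<^sub>R (2 *\<^sub>R h x)"
    by (simp add: algebra_simps scaleR_2)
  finally have "h (x \<otimes> y) + h (x \<otimes> inv y) = 2 *\<^sub>R h x"
    by (metis scaleR_cancel_left zero_neq_numeral)
  then show ?thesis
    by (simp add: jensen_defect_def)
qed

end

lemma (in group) hyers_limit_quasi_jensen:
  fixes f :: "'a \<Rightarrow> 'e::banach"
  assumes defect: "\<And>x y. x \<in> carrier G \<Longrightarrow> y \<in> carrier G \<Longrightarrow> norm (jensen_defect G f x y) \<le> c"
  defines "j \<equiv> hyers_limit (\<lambda>x. x \<otimes> x) f" and "b \<equiv> c + norm (f \<one>)"
  shows hyers_limit_close: "\<forall>x\<in>carrier G. norm (j x - f x) \<le> b"
    and hyers_limit_homogeneous_quasi_jensen: "homogeneous_quasi_jensen G j (c + 4 * b)"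
proof -
  have squares_closed: "(\<lambda>x. x \<otimes> x) ` carrier G \<subseteq> carrier G"
    by auto
  have quasi_doubling: "\<forall>x\<in>carrier G. norm (f (x \<otimes> x) - 2 *\<^sub>R f x) \<le> b"
  proof
    fix x assume "x \<in> carrier G"
    then have "f (x \<otimes> x) - 2 *\<^sub>R f x = jensen_defect G f x x + - f \<one>"
      by (simp add: jensen_defect_def)
    also have "norm \<dots> \<le> b"
      unfolding b_def by (rule norm_triangle_mono[OF defect[OF \<open>x \<in> carrier G\<close> \<open>x \<in> carrier G\<close>]]) simp
    finally show "norm (f (x \<otimes> x) - 2 *\<^sub>R f x) \<le> b" .
  qed
  show close: "\<forall>x\<in>carrier G. norm (j x - f x) \<le> b"
    using hyers_limit_dist[OF squares_closed quasi_doubling] by (simp add: j_def)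
  show "homogeneous_quasi_jensen G j (c + 4 * b)"
  proof
    show "j (x \<otimes> x) = 2 *\<^sub>R j x" if "x \<in> carrier G" for x
      unfolding j_def
      by (rule hyers_limit_doubling[OF convergentI[OF LIMSEQ_hyers_limit[OF squares_closed quasi_doubling that]]])
    show "norm (jensen_defect G j x y) \<le> c + 4 * b" if "x \<in> carrier G" "y \<in> carrier G" for x y
      using jensen_defect_perturb[OF close that] defect[OF that] by simp
  qed
qed

theorem theorem3p11:
  fixes G :: "('a, 'b) monoid_scheme" and f :: "'a \<Rightarrow> 'e::banach" and c :: real
  assumes "group G"
    and "metabelian_grp G"
    and "c > 0"
    and "\<forall>x\<in>carrier G. \<forall>y\<in>carrier G.
           norm (f (x \<otimes>\<^bsub>G\<^esub> y) + f (x \<otimes>\<^bsub>G\<^esub> inv\<^bsub>G\<^esub> y) - 2 *\<^sub>R f x) \<le> c"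
  shows "\<exists>j :: 'a \<Rightarrow> 'e.
           (\<forall>x\<in>carrier G. \<forall>y\<in>carrier G.
              j (x \<otimes>\<^bsub>G\<^esub> y) + j (x \<otimes>\<^bsub>G\<^esub> inv\<^bsub>G\<^esub> y) = 2 *\<^sub>R j x)
         \<and> (\<exists>B. \<forall>x\<in>carrier G. norm (j x - f x) \<le> B)"
proof -
  interpret group G by fact
  let ?j = "hyers_limit (\<lambda>x. x \<otimes>\<^bsub>G\<^esub> x) f"
  have defect: "norm (jensen_defect G f x y) \<le> c" if "x \<in> carrier G" "y \<in> carrier G" for x y
    using assms(4) that by (simp add: jensen_defect_def)
  interpret metabelian_homogeneous_quasi_jensen G ?j "c + 4 * (c + norm (f \<one>\<^bsub>G\<^esub>))"
    using hyers_limit_homogeneous_quasi_jensen[OF defect] assms(2)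
    by (simp add: metabelian_homogeneous_quasi_jensen_def metabelian_homogeneous_quasi_jensen_axioms_def)
  have "\<forall>x\<in>carrier G. \<forall>y\<in>carrier G. ?j (x \<otimes>\<^bsub>G\<^esub> y) + ?j (x \<otimes>\<^bsub>G\<^esub> inv\<^bsub>G\<^esub> y) = 2 *\<^sub>R ?j x"
    using jensen_defect_eq_0 by (simp add: jensen_defect_def)
  moreover have "\<forall>x\<in>carrier G. norm (?j x - f x) \<le> c + norm (f \<one>\<^bsub>G\<^esub>)"
    by (rule hyers_limit_close[OF defect])
  ultimately show ?thesis
    by blast
qed

end
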